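(* Let $A\neq 1$ and $B\neq 0$ be real constants and let $(x_n)_{n\ge0}$ be the solution of $$x_{n+10}=\frac{x_n}{A+B\,x_nx_{n+2}x_{n+4}x_{n+6}x_{n+8}},\qquad n\ge 0,$$ with initial conditions $x_0,\dots,x_9$. Suppose the initial conditions satisfy $x_0x_1x_2x_3x_4=\frac{1-A}{B}$, $x_i=x_{i+5}$ for $i=0,\dots,4$, and $x_i\neq x_{i+2}$. Then the solution is periodic with period $5$. *)

theory Defs
  imports Complex_Main
begin

end

theory Submission
  imports Defs "HOL-Number_Theory.Cong"
begin

(* The 5-periodic extension y of x 0, ..., x 4 solves the recurrence: the indices
   n, n+2, ..., n+8 run through all residues mod 5, so the denominator is
   A + B * x 0 * ... * x 4 = 1 and y (n + 10) = y n. Since x and y share their first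
   ten terms, x = y. A period 0 < p < 5 would be coprime to the period 5, and two
   coprime periods force x to be constant, contradicting x 0 \<noteq> x 2. *)

lemma periodic_add_mult:
  fixes f :: "nat \<Rightarrow> 'a" and p :: nat
  assumes "\<And>n. f (n + p) = f n"
  shows "f (n + k * p) = f n"
proof (induction k)
  case (Suc k)
  then show ?case using assms[of "n + k * p"] by (simp add: ac_simps)
qed simp

lemma periodic_mod:
  fixes f :: "nat \<Rightarrow> 'a" and p :: nat
  assumes "\<And>n. f (n + p) = f n"
  shows "f n = f (n mod p)"
  using periodic_add_mult[of f p "n mod p" "n div p", OF assms] by simp

lemma periodic_gcd:
  fixes f :: "nat \<Rightarrow> 'a" and p :: nat
  assumes "\<And>n. f (n + p) = f n" and "\<And>n. f (n + q) = f n" and "p \<noteq> 0"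
  shows "f (n + gcd p q) = f n"
proof -
  obtain a b where bezout: "p * a = q * b + gcd p q"
    using bezout_nat[OF \<open>p \<noteq> 0\<close>] by blast
  have "f (n + gcd p q) = f (n + gcd p q + b * q)"
    using periodic_add_mult[of f q, OF assms(2)] by simp
  also have "\<dots> = f (n + a * p)"
    using bezout by (simp add: ac_simps)
  also have "\<dots> = f n"
    using periodic_add_mult[of f p, OF assms(1)] by simp
  finally show ?thesis .
qed

lemma periodic_coprime_imp_constant:
  fixes f :: "nat \<Rightarrow> 'a" and p :: nat
  assumes "\<And>n. f (n + p) = f n" and "\<And>n. f (n + q) = f n" and "p \<noteq> 0" and "coprime p q"
  shows "f n = f 0"
proof (induction n)
  case (Suc n)
  then show ?case
    using periodic_gcd[OF assms(1-3), of n] \<open>coprime p q\<close> by simp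
qed simp

lemma prod_periodic_arith_progression:
  fixes f :: "nat \<Rightarrow> 'a::comm_monoid_mult"
  assumes per: "\<And>n. f (n + p) = f n" and "coprime q p"
  shows "(\<Prod>j<p. f (k + q * j)) = (\<Prod>i<p. f i)"
proof -
  define g where "g j = (k + q * j) mod p" for j
  have "inj_on g {..<p}"
  proof (rule inj_onI)
    fix i j assume "i \<in> {..<p}" "j \<in> {..<p}" "g i = g j"
    then have "[k + q * i = k + q * j] (mod p)"
      by (simp add: g_def cong_def)
    then have "[q * i = q * j] (mod p)"
      by (simp add: cong_add_lcancel_nat)
    then have "[i = j] (mod p)"
      using cong_mult_lcancel_nat[OF \<open>coprime q p\<close>] by simp
    with \<open>i \<in> {..<p}\<close> \<open>j \<in> {..<p}\<close> show "i = j"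
      using cong_less_modulus_unique_nat by auto
  qed
  moreover have "g ` {..<p} \<subseteq> {..<p}"
    by (auto simp: g_def)
  ultimately have "g ` {..<p} = {..<p}"
    by (simp add: endo_inj_surj)
  then have "(\<Prod>i<p. f i) = (\<Prod>j<p. f (g j))"
    using prod.reindex[OF \<open>inj_on g {..<p}\<close>, of f] by simp
  also have "\<dots> = (\<Prod>j<p. f (k + q * j))"
    using periodic_mod[of f p, OF per] by (simp add: g_def)
  finally show ?thesis by simp
qed

lemma period5_prod_stride2:
  fixes y :: "nat \<Rightarrow> 'a::comm_monoid_mult"
  assumes "\<And>n. y (n + 5) = y n"
  shows "y n * y (n + 2) * y (n + 4) * y (n + 6) * y (n + 8) = y 0 * y 1 * y 2 * y 3 * y 4"
proof -
  have "(\<Prod>j<5. y (n + 2 * j)) = (\<Prod>i<5. y i)"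
    by (rule prod_periodic_arith_progression) (simp_all add: assms)
  then show ?thesis
    by (simp add: numeral_eq_Suc mult_ac)
qed

lemma eq_if_recurrence_propagates:
  fixes x y :: "nat \<Rightarrow> 'a"
  assumes "\<And>i. i < m \<Longrightarrow> x i = y i"
    and "\<And>n. (\<And>i. i < m \<Longrightarrow> x (n + i) = y (n + i)) \<Longrightarrow> x (n + m) = y (n + m)"
  shows "x n = y n"
proof (induction n rule: less_induct)
  case (less n)
  show ?case
  proof (cases "n < m")
    case False
    then obtain k where "n = k + m"
      using le_Suc_ex not_less by (metis add.commute)
    then show ?thesis
      using assms(2)[of k] less.IH by simp
  qed (use assms(1) in simp)
qed

theorem theorem3:
  fixes A B :: real and x :: "nat \<Rightarrow> real"
  assumes hA: "A \<noteq> 1" and hB: "B \<noteq> 0"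
    and rec: "\<And>n. x (n + 10) = x n / (A + B * x n * x (n + 2) * x (n + 4) * x (n + 6) * x (n + 8))"
    and hprod: "x 0 * x 1 * x 2 * x 3 * x 4 = (1 - A) / B"
    and hper: "\<And>i. i \<le> 4 \<Longrightarrow> x i = x (i + 5)"
    and hdist: "\<And>i. i \<le> 4 \<Longrightarrow> x i \<noteq> x (i + 2)"
  shows "(\<forall>n. x (n + 5) = x n) \<and> (\<forall>p>0. (\<forall>n. x (n + p) = x n) \<longrightarrow> 5 \<le> p)"
proof -
  define y where "y n = x (n mod 5)" for n
  have y_per: "y (n + 5) = y n" for n
    by (simp add: y_def)
  have "A + B * y n * y (n + 2) * y (n + 4) * y (n + 6) * y (n + 8) = 1" for n
    using period5_prod_stride2[of y n, OF y_per] hprod hB by (simp add: y_def mult.assoc)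
  then have y_rec: "y (n + 10) = y n / (A + B * y n * y (n + 2) * y (n + 4) * y (n + 6) * y (n + 8))" for n
    using periodic_add_mult[of y 5 n 2, OF y_per] by simp
  have "x n = y n" for n
  proof (rule eq_if_recurrence_propagates[where m = 10])
    show "x i = y i" if "i < 10" for i
      using hper[of "i - 5"] that by (cases "i < 5") (auto simp: y_def mod_if)
    show "x (k + 10) = y (k + 10)" if "\<And>i. i < 10 \<Longrightarrow> x (k + i) = y (k + i)" for k
      using rec[of k] y_rec[of k] that[of 0] that[of 2] that[of 4] that[of 6] that[of 8] by simp
  qed
  then have x_per: "x (n + 5) = x n" for n
    using y_per by simp
  have "5 \<le> p" if "p > 0" and "\<forall>n. x (n + p) = x n" for p
  proof (rule ccontr)
    assume "\<not> 5 \<le> p"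
    with \<open>p > 0\<close> have "p \<in> {1, 2, 3, 4}"
      by auto
    then have "coprime p 5"
      by (elim insertE) (simp_all add: coprime_iff_gcd_eq_1 gcd_nat.simps)
    then have "x 2 = x 0"
      using periodic_coprime_imp_constant[of x p 5 2] that x_per by simp
    then show False
      using hdist[of 0] by (simp add: numeral_2_eq_2)
  qed
  with x_per show ?thesis by blast
qed

end
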